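(* Fix $K,n\in\mathbb{N}$ and $C>0$, and let $X\in[0,C]^K$ and $Y\subseteq[K]$ be (not necessarily independent) random variables with $Y\neq\emptyset$ almost surely. For $V,V_0\in\mathbb{R}^K$ define $f(X,Y;V)=\max_{k\in Y}\{X(k)+V(k)\}$ and $\Delta f(X,Y;V,V_0)=f(X,Y;V)-f(X,Y;V_0)$. Let $\{(X_i,Y_i)\}_{i\in[n]}$ be $n$ i.i.d. samples from the joint distribution of $(X,Y)$. Then for any $\delta\in(0,1)$, $V_0\in\mathbb{R}^K$ and $\alpha\in(0,1]$, with probability at least $1-\delta$, simultaneously for all $V\in\mathbb{R}^K$ with $V-V_0\in[0,C]^K$, $$\frac1n\sum_{i=1}^n\Delta f(X_i,Y_i;V,V_0)\le(1+\alpha)\mathbb{E}[\Delta f(X,Y;V,V_0)]+\frac{2CK\ln\frac{3n}{\delta}}{\alpha n}.$$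
   Context: $[K]=\{1,\dots,K\}$; $[0,C]^K$ is the set of vectors with all entries in $[0,C]$. *)

theory Defs
  imports "HOL-Probability.Probability"
begin

text \<open>f(X,Y;V) = max over k in Y of X(k) + V(k); vectors in R^K are functions nat => real
  of which only the coordinates 1..K matter.\<close>
definition fmax :: "(nat \<Rightarrow> real) \<Rightarrow> nat set \<Rightarrow> (nat \<Rightarrow> real) \<Rightarrow> real" where
  "fmax x y V = Max ((\<lambda>k. x k + V k) ` y)"

definition dfmax :: "(nat \<Rightarrow> real) \<Rightarrow> nat set \<Rightarrow> (nat \<Rightarrow> real) \<Rightarrow> (nat \<Rightarrow> real) \<Rightarrow> real" where
  "dfmax x y V V0 = fmax x y V - fmax x y V0"

end

theory Submission
  imports Defs
begin

(* For fixed V, the increment Delta f(.;V,V0) takes values in [0,C] because V0 <= V <= V0 + C, so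
   the exponential Markov inequality with parameter ln(1+alpha)/C (a multiplicative Chernoff bound)
   shows that the sum of its n samples exceeds n(1+alpha) E[Delta f] + C ln(N/delta)/ln(1+alpha)
   with probability at most delta/N. A union bound over the N = (2n+1)^K points of the grid
   V0 + (C/2n){0,...,2n}^K makes this hold simultaneously on the grid. Delta f is monotone in V and
   grows by at most e when every coordinate of V grows by at most e, so each V of the cube is
   dominated by a grid point at the extra cost (1+alpha)C/(2n) only. For n >= 3 the error terms
   fit under 2CK ln(3n/delta)/(alpha n), using ln(1+alpha) >= 2 alpha/(2+alpha); for n <= 2 that
   rate already exceeds C >= Delta f. *)

(* The Pade-type bound, not just x/(1+x) <= ln(1+x), is what the constant 2 of the rate needs. *)
lemma ln_add_one_lower_bound:
  fixes x :: real
  assumes "0 \<le> x"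
  shows "2 * x / (2 + x) \<le> ln (1 + x)"
proof -
  define h where "h = (\<lambda>y::real. ln (1 + y) - 2 * y / (2 + y))"
  have h_deriv: "(h has_real_derivative (1 / (1 + y) - 4 / (2 + y)\<^sup>2)) (at y)" if "0 \<le> y" for y
    unfolding h_def using that
    by (auto intro!: derivative_eq_intros simp: field_simps power2_eq_square)
  have h_deriv_nonneg: "0 \<le> 1 / (1 + y) - 4 / (2 + y)\<^sup>2" if "0 \<le> y" for y :: real
  proof -
    have "4 * (1 + y) \<le> (2 + y)\<^sup>2" by (simp add: power2_eq_square algebra_simps)
    then have "4 / (2 + y)\<^sup>2 \<le> 1 / (1 + y)" using that by (simp add: field_simps)
    then show ?thesis by simp
  qed
  have "h 0 \<le> h x"
    by (rule DERIV_nonneg_imp_nondecreasing[OF assms]) (use h_deriv h_deriv_nonneg in blast)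
  then show ?thesis by (simp add: h_def)
qed

lemma ln_add_one_ge_div:
  fixes x :: real
  assumes "0 \<le> x"
  shows "x / (1 + x) \<le> ln (1 + x)"
proof -
  have "x / (1 + x) \<le> 2 * x / (2 + x)" using assms by (simp add: field_simps)
  then show ?thesis using ln_add_one_lower_bound[OF assms] by linarith
qed

lemma exp_le_chord:
  fixes C z t :: real
  assumes "0 < C" "0 \<le> z" "z \<le> C"
  shows "exp (t * z) \<le> 1 + (exp (t * C) - 1) / C * z"
proof -
  define u where "u = z / C"
  have u: "0 \<le> u" "u \<le> 1" using assms by (auto simp: u_def)
  have "exp (t * z) = exp ((1 - u) *\<^sub>R 0 + u *\<^sub>R (t * C))"
    using assms by (simp add: u_def)
  also have "\<dots> \<le> (1 - u) * exp 0 + u * exp (t * C)"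
    using u by (intro convex_onD[OF exp_convex]) auto
  also have "\<dots> = 1 + (exp (t * C) - 1) / C * z"
    using assms by (simp add: u_def field_simps)
  finally show ?thesis .
qed

lemma (in prob_space) expectation_exp_le:
  fixes Z :: "'a \<Rightarrow> real"
  assumes [measurable]: "Z \<in> borel_measurable M" and "0 < C"
    and Z_range: "\<And>\<xi>. \<xi> \<in> space M \<Longrightarrow> 0 \<le> Z \<xi> \<and> Z \<xi> \<le> C"
  shows "expectation (\<lambda>\<xi>. exp (t * Z \<xi>)) \<le> exp ((exp (t * C) - 1) / C * expectation Z)"
proof -
  define c where "c = (exp (t * C) - 1) / C"
  have chord: "exp (t * Z \<xi>) \<le> 1 + c * Z \<xi>" if "\<xi> \<in> space M" for \<xi>
    unfolding c_def using Z_range[OF that] \<open>0 < C\<close> by (intro exp_le_chord) auto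
  have Z_int: "integrable M Z"
    using Z_range by (intro integrable_const_bound[where B = C]) auto
  then have chord_int: "integrable M (\<lambda>\<xi>. 1 + c * Z \<xi>)" by simp
  have "integrable M (\<lambda>\<xi>. exp (t * Z \<xi>))"
    using chord by (intro Bochner_Integration.integrable_bound[OF chord_int])
      (auto intro!: AE_I2 intro: order_trans[OF _ abs_ge_self])
  then have "expectation (\<lambda>\<xi>. exp (t * Z \<xi>)) \<le> expectation (\<lambda>\<xi>. 1 + c * Z \<xi>)"
    using chord_int chord by (intro integral_mono) auto
  also have "\<dots> = 1 + c * expectation Z"
    using Z_int by (simp add: prob_space)
  also have "\<dots> \<le> exp (c * expectation Z)" by (rule exp_ge_add_one_self)
  finally show ?thesis by (simp add: c_def)
qed

lemma (in prob_space) exponential_Markov_PiM_sum: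
  fixes Z :: "'a \<Rightarrow> real"
  assumes "finite I" and [measurable]: "Z \<in> borel_measurable M"
    and "integrable M (\<lambda>\<xi>. exp (t * Z \<xi>))" and "0 \<le> t"
  shows "measure (PiM I (\<lambda>_. M)) {\<omega> \<in> space (PiM I (\<lambda>_. M)). s \<le> (\<Sum>i\<in>I. Z (\<omega> i))}
    \<le> expectation (\<lambda>\<xi>. exp (t * Z \<xi>)) ^ card I / exp (t * s)"
proof -
  let ?P = "PiM I (\<lambda>_. M)"
  interpret P: prob_space ?P by (intro prob_space_PiM prob_space_axioms)
  interpret product_sigma_finite "\<lambda>_. M"
    by (simp add: product_sigma_finite_def sigma_finite_measure_axioms)
  define u where "u \<omega> = (\<Prod>i\<in>I. exp (t * Z (\<omega> i)))" for \<omega>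
  have u_int: "integrable ?P u"
    unfolding u_def using assms by (intro product_integrable_prod) auto
  have u_nonneg: "AE \<omega> in ?P. 0 \<le> u \<omega>" by (simp add: u_def prod_nonneg)
  have "{\<omega> \<in> space ?P. s \<le> (\<Sum>i\<in>I. Z (\<omega> i))} \<subseteq> {\<omega> \<in> space ?P. exp (t * s) \<le> u \<omega>}"
  proof safe
    fix \<omega> assume "s \<le> (\<Sum>i\<in>I. Z (\<omega> i))"
    then have "exp (t * s) \<le> exp (t * (\<Sum>i\<in>I. Z (\<omega> i)))"
      using \<open>0 \<le> t\<close> by (simp add: mult_left_mono)
    also have "\<dots> = u \<omega>"
      by (simp add: u_def sum_distrib_left exp_sum[OF \<open>finite I\<close>])
    finally show "exp (t * s) \<le> u \<omega>" .
  qed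
  then have "measure ?P {\<omega> \<in> space ?P. s \<le> (\<Sum>i\<in>I. Z (\<omega> i))}
      \<le> measure ?P {\<omega> \<in> space ?P. exp (t * s) \<le> u \<omega>}"
    using u_int by (intro P.finite_measure_mono) auto
  also have "\<dots> \<le> (\<integral>\<omega>. u \<omega> \<partial>?P) / exp (t * s)"
    by (rule integral_Markov_inequality_measure[OF u_int _ u_nonneg]) auto
  also have "(\<integral>\<omega>. u \<omega> \<partial>?P) = expectation (\<lambda>\<xi>. exp (t * Z \<xi>)) ^ card I"
    unfolding u_def using assms by (subst product_integral_prod) auto
  finally show ?thesis .
qed

lemma (in prob_space) multiplicative_chernoff_upper:
  fixes Z :: "'a \<Rightarrow> real"
  assumes "finite I" and [measurable]: "Z \<in> borel_measurable M" and "0 < C" and "0 < \<alpha>"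
    and Z_range: "\<And>\<xi>. \<xi> \<in> space M \<Longrightarrow> 0 \<le> Z \<xi> \<and> Z \<xi> \<le> C"
  shows "measure (PiM I (\<lambda>_. M)) {\<omega> \<in> space (PiM I (\<lambda>_. M)).
           real (card I) * (1 + \<alpha>) * expectation Z + C * s / ln (1 + \<alpha>) \<le> (\<Sum>i\<in>I. Z (\<omega> i))}
         \<le> exp (- s)"
proof -
  define L where "L = ln (1 + \<alpha>)"
  define t where "t = L / C"
  define \<mu> where "\<mu> = expectation Z"
  have "0 < L" using \<open>0 < \<alpha>\<close> by (simp add: L_def)
  then have "0 \<le> t" using \<open>0 < C\<close> by (simp add: t_def)
  have exp_tC: "exp (t * C) = 1 + \<alpha>"
    using \<open>0 < C\<close> \<open>0 < \<alpha>\<close> by (simp add: t_def L_def)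
  have \<alpha>_le: "\<alpha> / C \<le> t * (1 + \<alpha>)"
    using ln_add_one_ge_div[of \<alpha>] \<open>0 < C\<close> \<open>0 < \<alpha>\<close> by (simp add: t_def L_def field_simps)
  have "0 \<le> \<mu>" unfolding \<mu>_def using Z_range by (intro integral_nonneg_AE AE_I2) auto
  have mgf: "expectation (\<lambda>\<xi>. exp (t * Z \<xi>)) \<le> exp (\<alpha> / C * \<mu>)"
    using expectation_exp_le[of Z C t] Z_range \<open>0 < C\<close> by (simp add: exp_tC \<mu>_def)
  have "integrable M (\<lambda>\<xi>. exp (t * Z \<xi>))"
    using Z_range \<open>0 \<le> t\<close>
    by (intro integrable_const_bound[where B = "exp (t * C)"] AE_I2) (auto intro: mult_left_mono)
  have exponent: "real (card I) * (\<alpha> / C * \<mu>) - t * (real (card I) * (1 + \<alpha>) * \<mu> + C * s / L) \<le> - s"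
  proof -
    have "real (card I) * \<mu> * (\<alpha> / C) \<le> real (card I) * \<mu> * (t * (1 + \<alpha>))"
      using \<alpha>_le \<open>0 \<le> \<mu>\<close> by (intro mult_left_mono) auto
    moreover have "t * (C * s / L) = s" using \<open>0 < C\<close> \<open>0 < L\<close> by (simp add: t_def)
    ultimately show ?thesis by (simp add: algebra_simps)
  qed
  then have "measure (PiM I (\<lambda>_. M)) {\<omega> \<in> space (PiM I (\<lambda>_. M)).
           real (card I) * (1 + \<alpha>) * \<mu> + C * s / L \<le> (\<Sum>i\<in>I. Z (\<omega> i))}
      \<le> expectation (\<lambda>\<xi>. exp (t * Z \<xi>)) ^ card I / exp (t * (real (card I) * (1 + \<alpha>) * \<mu> + C * s / L))"
    using \<open>finite I\<close> \<open>0 \<le> t\<close> \<open>integrable M _\<close> by (intro exponential_Markov_PiM_sum) auto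
  also have "\<dots> \<le> exp (\<alpha> / C * \<mu>) ^ card I / exp (t * (real (card I) * (1 + \<alpha>) * \<mu> + C * s / L))"
    using mgf by (intro divide_right_mono power_mono) auto
  also have "\<dots> = exp (real (card I) * (\<alpha> / C * \<mu>) - t * (real (card I) * (1 + \<alpha>) * \<mu> + C * s / L))"
    by (simp only: exp_of_nat_mult[symmetric] exp_diff)
  also have "\<dots> \<le> exp (- s)"
    using exponent by simp
  finally show ?thesis by (simp only: L_def \<mu>_def)
qed

lemma (in prob_space) uniform_chernoff_finite_family:
  fixes Z :: "'g \<Rightarrow> 'a \<Rightarrow> real"
  assumes "finite I" "finite G" "0 < N" "real (card G) \<le> N" "0 < \<delta>" "0 < C" "0 < \<alpha>"
    and Z_measurable: "\<And>g. g \<in> G \<Longrightarrow> Z g \<in> borel_measurable M"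
    and Z_range: "\<And>g \<xi>. g \<in> G \<Longrightarrow> \<xi> \<in> space M \<Longrightarrow> 0 \<le> Z g \<xi> \<and> Z g \<xi> \<le> C"
  shows "\<exists>E \<in> sets (PiM I (\<lambda>_. M)). 1 - \<delta> \<le> measure (PiM I (\<lambda>_. M)) E \<and>
           (\<forall>\<omega> \<in> E. \<forall>g \<in> G. (\<Sum>i\<in>I. Z g (\<omega> i))
              < real (card I) * (1 + \<alpha>) * expectation (Z g) + C * ln (N / \<delta>) / ln (1 + \<alpha>))"
proof -
  let ?P = "PiM I (\<lambda>_. M)"
  interpret P: prob_space ?P by (intro prob_space_PiM prob_space_axioms)
  define Bad where "Bad g = {\<omega> \<in> space ?P. real (card I) * (1 + \<alpha>) * expectation (Z g)
    + C * ln (N / \<delta>) / ln (1 + \<alpha>) \<le> (\<Sum>i\<in>I. Z g (\<omega> i))}" for g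
  have Bad_sets: "Bad g \<in> sets ?P" if "g \<in> G" for g
  proof -
    have [measurable]: "Z g \<in> borel_measurable M" using Z_measurable[OF that] .
    show ?thesis unfolding Bad_def by measurable
  qed
  have Bad_measure: "measure ?P (Bad g) \<le> \<delta> / N" if "g \<in> G" for g
  proof -
    have "measure ?P (Bad g) \<le> exp (- ln (N / \<delta>))"
      unfolding Bad_def using assms that by (intro multiplicative_chernoff_upper) auto
    also have "\<dots> = \<delta> / N" using \<open>0 < N\<close> \<open>0 < \<delta>\<close> by (simp add: exp_minus)
    finally show ?thesis .
  qed
  have "measure ?P (\<Union>g\<in>G. Bad g) \<le> (\<Sum>g\<in>G. measure ?P (Bad g))"
    using \<open>finite G\<close> Bad_sets by (intro P.finite_measure_subadditive_finite) auto
  also have "\<dots> \<le> real (card G) * (\<delta> / N)"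
    using Bad_measure by (intro sum_bounded_above) auto
  also have "\<dots> \<le> \<delta>"
    using assms by (simp add: field_simps mult_right_mono)
  finally have E_measure: "1 - \<delta> \<le> measure ?P (space ?P - (\<Union>g\<in>G. Bad g))"
    using \<open>finite G\<close> Bad_sets by (subst P.prob_compl) auto
  have E_sets: "space ?P - (\<Union>g\<in>G. Bad g) \<in> sets ?P"
    using \<open>finite G\<close> Bad_sets by auto
  have E_bound: "(\<Sum>i\<in>I. Z g (\<omega> i))
      < real (card I) * (1 + \<alpha>) * expectation (Z g) + C * ln (N / \<delta>) / ln (1 + \<alpha>)"
    if "\<omega> \<in> space ?P - (\<Union>g\<in>G. Bad g)" "g \<in> G" for \<omega> g
    using that unfolding Bad_def by auto
  show ?thesis by (intro bexI[OF _ E_sets] conjI ballI E_measure E_bound)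
qed

definition offset_cube :: "nat \<Rightarrow> (nat \<Rightarrow> real) \<Rightarrow> real \<Rightarrow> (nat \<Rightarrow> real) set" where
  "offset_cube K V0 C = {V. \<forall>k \<in> {1..K}. 0 \<le> V k - V0 k \<and> V k - V0 k \<le> C}"

definition cube_grid :: "nat \<Rightarrow> (nat \<Rightarrow> real) \<Rightarrow> real \<Rightarrow> nat \<Rightarrow> (nat \<Rightarrow> real) set" where
  "cube_grid K V0 C q = (\<lambda>j k. V0 k + C * real (j k) / real q) ` ({1..K} \<rightarrow>\<^sub>E {0..q})"

lemma finite_cube_grid: "finite (cube_grid K V0 C q)"
  by (simp add: cube_grid_def finite_PiE)

lemma card_cube_grid_le: "card (cube_grid K V0 C q) \<le> (q + 1) ^ K"
proof -
  have "card (cube_grid K V0 C q) \<le> card ({1..K} \<rightarrow>\<^sub>E {0..q})"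
    unfolding cube_grid_def by (intro card_image_le) (simp add: finite_PiE)
  then show ?thesis by (simp add: card_PiE)
qed

lemma cube_grid_subset_offset_cube:
  assumes "0 < q" "0 \<le> C"
  shows "cube_grid K V0 C q \<subseteq> offset_cube K V0 C"
proof
  fix g assume "g \<in> cube_grid K V0 C q"
  then obtain j where j: "j \<in> {1..K} \<rightarrow>\<^sub>E {0..q}" and g: "g = (\<lambda>k. V0 k + C * real (j k) / real q)"
    by (auto simp: cube_grid_def)
  have "0 \<le> g k - V0 k \<and> g k - V0 k \<le> C" if "k \<in> {1..K}" for k
  proof -
    have "real (j k) \<le> real q" using j that by (auto simp: PiE_iff)
    then have "C * real (j k) \<le> C * real q" using assms(2) by (rule mult_left_mono)
    then show ?thesis using assms by (simp add: g pos_divide_le_eq)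
  qed
  then show "g \<in> offset_cube K V0 C" by (simp add: offset_cube_def)
qed

lemma cube_grid_dominates:
  assumes "0 < q" "0 < C" "V \<in> offset_cube K V0 C"
  shows "\<exists>g \<in> cube_grid K V0 C q. \<forall>k \<in> {1..K}. V k \<le> g k \<and> g k \<le> V k + C / real q"
proof -
  define r where "r k = (V k - V0 k) * real q / C" for k
  define j where "j = (\<lambda>k \<in> {1..K}. nat \<lceil>r k\<rceil>)"
  have j_bounds: "r k \<le> real (j k) \<and> real (j k) \<le> r k + 1 \<and> j k \<le> q" if "k \<in> {1..K}" for k
  proof -
    have "0 \<le> V k - V0 k" "V k - V0 k \<le> C" using assms(3) that by (auto simp: offset_cube_def)
    then have "0 \<le> r k" "r k \<le> real q"
      using assms(1,2) by (auto simp: r_def pos_divide_le_eq mult_right_mono)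
    moreover have "real (j k) = of_int \<lceil>r k\<rceil>" using \<open>0 \<le> r k\<close> that by (simp add: j_def)
    ultimately show ?thesis
      using le_of_int_ceiling[of "r k"] of_int_ceiling_le_add_one[of "r k"] by linarith
  qed
  define g where "g k = V0 k + C * real (j k) / real q" for k
  have "j \<in> {1..K} \<rightarrow>\<^sub>E {0..q}" using j_bounds by (auto simp: j_def)
  then have g_grid: "g \<in> cube_grid K V0 C q"
    unfolding cube_grid_def g_def[abs_def] by (rule imageI)
  have g_bounds: "V k \<le> g k \<and> g k \<le> V k + C / real q" if "k \<in> {1..K}" for k
  proof -
    have "V k - V0 k = C * r k / real q" using assms(1,2) by (simp add: r_def field_simps)
    also have "\<dots> \<le> C * real (j k) / real q"
      using j_bounds[OF that] assms(2) by (intro divide_right_mono mult_left_mono) auto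
    finally have "V k \<le> g k" by (simp add: g_def)
    moreover have "C * real (j k) / real q \<le> C * (r k + 1) / real q"
      using j_bounds[OF that] assms(2) by (intro divide_right_mono mult_left_mono) auto
    moreover have "C * (r k + 1) / real q = V k - V0 k + C / real q"
      using assms(1,2) by (simp add: r_def field_simps)
    ultimately show ?thesis by (simp add: g_def)
  qed
  show ?thesis using g_grid g_bounds by blast
qed

definition deviation_rate :: "real \<Rightarrow> nat \<Rightarrow> nat \<Rightarrow> real \<Rightarrow> real \<Rightarrow> real" where
  "deviation_rate C K n \<delta> \<alpha> = 2 * C * real K * ln (3 * real n / \<delta>) / (\<alpha> * real n)"

lemma two_le_ln_three_mult:
  assumes "3 \<le> n"
  shows "2 \<le> ln (3 * real n)"
proof -
  have "exp (2::real) = exp 1 * exp 1" by (simp flip: exp_add)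
  also have "\<dots> \<le> 3 * 3" using exp_le by (intro mult_mono) auto
  also have "\<dots> \<le> 3 * real n" using assms by simp
  finally show ?thesis using assms by (subst ln_ge_iff) auto
qed

lemma deviation_rate_key_inequality:
  fixes \<alpha> l A :: real and K :: nat
  assumes "0 < \<alpha>" "\<alpha> \<le> 1" "1 \<le> K" "2 \<le> l" "0 \<le> A"
  shows "\<alpha> * (1 + \<alpha>) + (real K * l + A) * (2 + \<alpha>) \<le> 4 * real K * (l + A)"
proof -
  have "\<alpha> * \<alpha> \<le> 1" using assms by (simp add: mult_le_one)
  then have "\<alpha> * (1 + \<alpha>) \<le> 2" using assms by (simp add: algebra_simps)
  moreover have "2 \<le> real K * l * (2 - \<alpha>)"
  proof -
    have "l \<le> real K * l" using assms(3,4) by (simp add: mult_le_cancel_right1)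
    also have "\<dots> = real K * l * 1" by simp
    also have "\<dots> \<le> real K * l * (2 - \<alpha>)"
      using assms(2,4) by (intro mult_left_mono) auto
    finally show ?thesis using assms(4) by linarith
  qed
  moreover have "0 \<le> A * (4 * real K - 2 - \<alpha>)" using assms by simp
  ultimately show ?thesis by (simp add: algebra_simps)
qed

lemma grid_error_le_deviation_rate:
  fixes C \<alpha> \<delta> :: real and K n :: nat
  assumes "0 < C" "0 < \<alpha>" "\<alpha> \<le> 1" "0 < \<delta>" "\<delta> < 1" "1 \<le> K" "3 \<le> n"
  shows "(1 + \<alpha>) * (C / real (2 * n)) + C * ln (real ((2 * n + 1) ^ K) / \<delta>) / ln (1 + \<alpha>) / real n
    \<le> deviation_rate C K n \<delta> \<alpha>"
proof -
  define A where "A = - ln \<delta>"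
  define l where "l = ln (3 * real n)"
  define L where "L = ln (1 + \<alpha>)"
  have "0 < A" using assms by (simp add: A_def)
  have "2 \<le> l" unfolding l_def by (rule two_le_ln_three_mult[OF assms(7)])
  have "0 < L" using assms by (simp add: L_def)
  have inv_L: "1 / L \<le> (2 + \<alpha>) / (2 * \<alpha>)"
    using ln_add_one_lower_bound[of \<alpha>] assms \<open>0 < L\<close> by (simp add: L_def field_simps)
  have ln_grid: "ln (real ((2 * n + 1) ^ K) / \<delta>) \<le> real K * l + A"
  proof -
    have "ln (real (2 * n + 1)) \<le> l" unfolding l_def using assms by simp
    then have "real K * ln (real (2 * n + 1)) \<le> real K * l" by (rule mult_left_mono) simp
    then show ?thesis using assms by (simp add: ln_div ln_realpow A_def)
  qed
  have ln_rate: "ln (3 * real n / \<delta>) = l + A" using assms by (simp add: ln_div l_def A_def)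
  have key: "\<alpha> * (1 + \<alpha>) + (real K * l + A) * (2 + \<alpha>) \<le> 4 * real K * (l + A)"
    using assms \<open>2 \<le> l\<close> \<open>0 < A\<close> by (intro deviation_rate_key_inequality) auto
  have "(1 + \<alpha>) * (C / real (2 * n)) + C * ln (real ((2 * n + 1) ^ K) / \<delta>) / L / real n
      \<le> (1 + \<alpha>) * (C / real (2 * n)) + C * (real K * l + A) * (1 / L) / real n"
    using ln_grid assms \<open>0 < L\<close> by (simp add: divide_right_mono)
  also have "\<dots> \<le> (1 + \<alpha>) * (C / real (2 * n)) + C * (real K * l + A) * ((2 + \<alpha>) / (2 * \<alpha>)) / real n"
    using inv_L assms \<open>0 < A\<close> \<open>2 \<le> l\<close> by (intro add_left_mono divide_right_mono mult_left_mono) auto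
  also have "\<dots> = C / (2 * \<alpha> * real n) * (\<alpha> * (1 + \<alpha>) + (real K * l + A) * (2 + \<alpha>))"
    using assms by (simp add: field_simps)
  also have "\<dots> \<le> C / (2 * \<alpha> * real n) * (4 * real K * (l + A))"
    using key assms by (intro mult_left_mono) auto
  also have "\<dots> = deviation_rate C K n \<delta> \<alpha>"
    unfolding deviation_rate_def ln_rate using assms by (simp add: field_simps)
  finally show ?thesis by (simp only: L_def)
qed

lemma range_le_deviation_rate:
  fixes C \<alpha> \<delta> :: real and K n :: nat
  assumes "0 < C" "0 < \<alpha>" "\<alpha> \<le> 1" "0 < \<delta>" "\<delta> < 1" "1 \<le> K" "1 \<le> n" "n \<le> 2"
  shows "C \<le> deviation_rate C K n \<delta> \<alpha>"
proof -
  have "exp 1 \<le> (3::real)" by (rule exp_le)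
  also have "\<dots> \<le> 3 * real n" using assms by simp
  also have "\<dots> \<le> 3 * real n / \<delta>" using assms by (simp add: le_divide_eq)
  finally have "1 \<le> ln (3 * real n / \<delta>)" using assms by (subst ln_ge_iff) auto
  moreover have "1 \<le> 2 * real K / (\<alpha> * real n)"
  proof -
    have "\<alpha> * real n \<le> 1 * 2" using assms by (intro mult_mono) auto
    then show ?thesis using assms by (simp add: field_simps)
  qed
  ultimately have "1 * 1 \<le> 2 * real K / (\<alpha> * real n) * ln (3 * real n / \<delta>)"
    by (intro mult_mono) auto
  then have "C * 1 \<le> C * (2 * real K / (\<alpha> * real n) * ln (3 * real n / \<delta>))"
    using assms(1) by (intro mult_left_mono) auto
  then show ?thesis by (simp add: deviation_rate_def field_simps)
qed

lemma empirical_mean_le_bound: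
  fixes Z :: "'a \<Rightarrow> real"
  assumes "1 \<le> n" "\<omega> \<in> space (PiM {1..n} (\<lambda>_. M))" "\<And>\<xi>. \<xi> \<in> space M \<Longrightarrow> Z \<xi> \<le> C"
  shows "(1 / real n) * (\<Sum>i = 1..n. Z (\<omega> i)) \<le> C"
proof -
  have "\<omega> i \<in> space M" if "i \<in> {1..n}" for i
    using PiE_mem[OF assms(2)[unfolded space_PiM] that] .
  then have "(\<Sum>i = 1..n. Z (\<omega> i)) \<le> real n * C"
    using assms(3) sum_bounded_above[of "{1..n}" "\<lambda>i. Z (\<omega> i)" C] by simp
  then show ?thesis using assms(1) by (simp add: field_simps)
qed

locale monotone_cube_family = prob_space +
  fixes F :: "(nat \<Rightarrow> real) \<Rightarrow> 'a \<Rightarrow> real" and K :: nat and V0 :: "nat \<Rightarrow> real" and C :: real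
  assumes C_pos: "0 < C"
    and F_measurable: "\<And>V. F V \<in> borel_measurable M"
    and F_range: "\<And>V \<xi>. V \<in> offset_cube K V0 C \<Longrightarrow> \<xi> \<in> space M \<Longrightarrow> 0 \<le> F V \<xi> \<and> F V \<xi> \<le> C"
    and F_mono: "\<And>V W \<xi>. \<xi> \<in> space M \<Longrightarrow> \<forall>k \<in> {1..K}. V k \<le> W k \<Longrightarrow> F V \<xi> \<le> F W \<xi>"
    and F_le_add: "\<And>V W e \<xi>. \<xi> \<in> space M \<Longrightarrow> 0 \<le> e \<Longrightarrow> \<forall>k \<in> {1..K}. W k \<le> V k + e \<Longrightarrow>
      F W \<xi> \<le> F V \<xi> + e"
begin

lemma F_integrable: "V \<in> offset_cube K V0 C \<Longrightarrow> integrable M (F V)"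
  using F_range F_measurable by (intro integrable_const_bound[where B = C] AE_I2) auto

lemma expectation_F_le_add:
  assumes "V \<in> offset_cube K V0 C" "W \<in> offset_cube K V0 C" "0 \<le> e" "\<forall>k \<in> {1..K}. W k \<le> V k + e"
  shows "expectation (F W) \<le> expectation (F V) + e"
proof -
  have "expectation (F W) \<le> expectation (\<lambda>\<xi>. F V \<xi> + e)"
    using F_integrable[OF assms(1)] F_integrable[OF assms(2)] assms(3,4)
    by (intro integral_mono F_le_add) auto
  then show ?thesis using F_integrable[OF assms(1)] by (simp add: prob_space)
qed

lemma uniform_chernoff_offset_cube:
  assumes "finite I" "0 < q" "0 < \<alpha>" "0 < \<delta>"
  shows "\<exists>E \<in> sets (PiM I (\<lambda>_. M)). 1 - \<delta> \<le> measure (PiM I (\<lambda>_. M)) E \<and>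
           (\<forall>\<omega> \<in> E. \<forall>V \<in> offset_cube K V0 C. (\<Sum>i\<in>I. F V (\<omega> i))
              \<le> real (card I) * (1 + \<alpha>) * (expectation (F V) + C / real q)
                + C * ln (real ((q + 1) ^ K) / \<delta>) / ln (1 + \<alpha>))"
proof -
  let ?P = "PiM I (\<lambda>_. M)"
  let ?G = "cube_grid K V0 C q"
  have grid_cube: "?G \<subseteq> offset_cube K V0 C"
    using assms C_pos by (intro cube_grid_subset_offset_cube) auto
  have "real (card ?G) \<le> real ((q + 1) ^ K)"
    by (simp only: of_nat_le_iff card_cube_grid_le)
  then have "\<exists>E \<in> sets ?P. 1 - \<delta> \<le> measure ?P E \<and> (\<forall>\<omega> \<in> E. \<forall>g \<in> ?G. (\<Sum>i\<in>I. F g (\<omega> i))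
      < real (card I) * (1 + \<alpha>) * expectation (F g) + C * ln (real ((q + 1) ^ K) / \<delta>) / ln (1 + \<alpha>))"
    using assms C_pos F_measurable F_range grid_cube finite_cube_grid
    by (intro uniform_chernoff_finite_family) auto
  then obtain E where E_sets: "E \<in> sets ?P" and E_measure: "1 - \<delta> \<le> measure ?P E"
    and E_bound: "\<And>\<omega> g. \<omega> \<in> E \<Longrightarrow> g \<in> ?G \<Longrightarrow> (\<Sum>i\<in>I. F g (\<omega> i))
      < real (card I) * (1 + \<alpha>) * expectation (F g) + C * ln (real ((q + 1) ^ K) / \<delta>) / ln (1 + \<alpha>)"
    by blast
  have "(\<Sum>i\<in>I. F V (\<omega> i))
      \<le> real (card I) * (1 + \<alpha>) * (expectation (F V) + C / real q)
        + C * ln (real ((q + 1) ^ K) / \<delta>) / ln (1 + \<alpha>)"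
    if \<omega>: "\<omega> \<in> E" and V: "V \<in> offset_cube K V0 C" for \<omega> V
  proof -
    obtain g where g: "g \<in> ?G" and V_le_g: "\<forall>k \<in> {1..K}. V k \<le> g k \<and> g k \<le> V k + C / real q"
      using cube_grid_dominates[OF \<open>0 < q\<close> C_pos V] by blast
    have g_cube: "g \<in> offset_cube K V0 C" using g grid_cube by blast
    have "\<omega> i \<in> space M" if "i \<in> I" for i
      using sets.sets_into_space[OF E_sets] \<omega> that by (auto simp: space_PiM)
    then have "(\<Sum>i\<in>I. F V (\<omega> i)) \<le> (\<Sum>i\<in>I. F g (\<omega> i))"
      using V_le_g by (intro sum_mono F_mono) auto
    moreover have "expectation (F g) \<le> expectation (F V) + C / real q"
      using V g_cube V_le_g assms(2) C_pos by (intro expectation_F_le_add) auto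
    then have "real (card I) * (1 + \<alpha>) * expectation (F g)
        \<le> real (card I) * (1 + \<alpha>) * (expectation (F V) + C / real q)"
      using \<open>0 < \<alpha>\<close> by (intro mult_left_mono) auto
    ultimately show ?thesis using E_bound[OF \<omega> g] by linarith
  qed
  then show ?thesis using E_sets E_measure by blast
qed

lemma empirical_mean_bound_large_sample:
  assumes "3 \<le> n" "1 \<le> K" "0 < \<alpha>" "\<alpha> \<le> 1" "0 < \<delta>" "\<delta> < 1"
  shows "\<exists>E \<in> sets (PiM {1..n} (\<lambda>_. M)). 1 - \<delta> \<le> measure (PiM {1..n} (\<lambda>_. M)) E \<and>
           (\<forall>\<omega> \<in> E. \<forall>V \<in> offset_cube K V0 C. (1 / real n) * (\<Sum>i = 1..n. F V (\<omega> i))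
              \<le> (1 + \<alpha>) * expectation (F V) + deviation_rate C K n \<delta> \<alpha>)"
proof -
  have "\<exists>E \<in> sets (PiM {1..n} (\<lambda>_. M)). 1 - \<delta> \<le> measure (PiM {1..n} (\<lambda>_. M)) E \<and>
           (\<forall>\<omega> \<in> E. \<forall>V \<in> offset_cube K V0 C. (\<Sum>i\<in>{1..n}. F V (\<omega> i))
              \<le> real (card {1..n}) * (1 + \<alpha>) * (expectation (F V) + C / real (2 * n))
                + C * ln (real ((2 * n + 1) ^ K) / \<delta>) / ln (1 + \<alpha>))"
    using assms by (intro uniform_chernoff_offset_cube) auto
  then obtain E where E_sets: "E \<in> sets (PiM {1..n} (\<lambda>_. M))"
    and E_measure: "1 - \<delta> \<le> measure (PiM {1..n} (\<lambda>_. M)) E"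
    and E_bound: "\<And>\<omega> V. \<omega> \<in> E \<Longrightarrow> V \<in> offset_cube K V0 C \<Longrightarrow> (\<Sum>i = 1..n. F V (\<omega> i))
      \<le> real n * (1 + \<alpha>) * (expectation (F V) + C / real (2 * n))
        + C * ln (real ((2 * n + 1) ^ K) / \<delta>) / ln (1 + \<alpha>)"
    by auto
  have "(1 / real n) * (\<Sum>i = 1..n. F V (\<omega> i)) \<le> (1 + \<alpha>) * expectation (F V) + deviation_rate C K n \<delta> \<alpha>"
    if "\<omega> \<in> E" "V \<in> offset_cube K V0 C" for \<omega> V
  proof -
    have "(1 / real n) * (\<Sum>i = 1..n. F V (\<omega> i))
        \<le> (1 / real n) * (real n * (1 + \<alpha>) * (expectation (F V) + C / real (2 * n))
          + C * ln (real ((2 * n + 1) ^ K) / \<delta>) / ln (1 + \<alpha>))"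
      using E_bound[OF that] by (intro mult_left_mono) auto
    also have "\<dots> = (1 + \<alpha>) * expectation (F V) + ((1 + \<alpha>) * (C / real (2 * n))
        + C * ln (real ((2 * n + 1) ^ K) / \<delta>) / ln (1 + \<alpha>) / real n)"
      using assms(1) by (simp add: field_simps)
    also have "\<dots> \<le> (1 + \<alpha>) * expectation (F V) + deviation_rate C K n \<delta> \<alpha>"
      using grid_error_le_deviation_rate[of C \<alpha> \<delta> K n] assms C_pos by simp
    finally show ?thesis .
  qed
  then show ?thesis using E_sets E_measure by blast
qed

lemma empirical_mean_bound_over_cube:
  assumes "1 \<le> n" "1 \<le> K" "0 < \<alpha>" "\<alpha> \<le> 1" "0 < \<delta>" "\<delta> < 1"
  shows "\<exists>E \<in> sets (PiM {1..n} (\<lambda>_. M)). 1 - \<delta> \<le> measure (PiM {1..n} (\<lambda>_. M)) E \<and>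
           (\<forall>\<omega> \<in> E. \<forall>V \<in> offset_cube K V0 C. (1 / real n) * (\<Sum>i = 1..n. F V (\<omega> i))
              \<le> (1 + \<alpha>) * expectation (F V) + deviation_rate C K n \<delta> \<alpha>)"
proof (cases "3 \<le> n")
  case True
  then show ?thesis using assms by (intro empirical_mean_bound_large_sample) auto
next
  case False
  interpret P: prob_space "PiM {1..n} (\<lambda>_. M)"
    by (intro prob_space_PiM prob_space_axioms)
  show ?thesis
  proof (intro bexI[of _ "space (PiM {1..n} (\<lambda>_. M))"] conjI ballI)
    show "1 - \<delta> \<le> measure (PiM {1..n} (\<lambda>_. M)) (space (PiM {1..n} (\<lambda>_. M)))"
      using P.prob_space \<open>0 < \<delta>\<close> by simp
    fix \<omega> V assume \<omega>: "\<omega> \<in> space (PiM {1..n} (\<lambda>_. M))" and V: "V \<in> offset_cube K V0 C"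
    have "(1 / real n) * (\<Sum>i = 1..n. F V (\<omega> i)) \<le> C"
      using F_range[OF V] by (intro empirical_mean_le_bound[OF assms(1) \<omega>]) blast
    also have "C \<le> deviation_rate C K n \<delta> \<alpha>"
      using False assms C_pos by (intro range_le_deviation_rate) auto
    also have "\<dots> \<le> (1 + \<alpha>) * expectation (F V) + deviation_rate C K n \<delta> \<alpha>"
      using F_range[OF V] \<open>0 < \<alpha>\<close> by (simp add: integral_nonneg_AE AE_I2)
    finally show "(1 / real n) * (\<Sum>i = 1..n. F V (\<omega> i))
        \<le> (1 + \<alpha>) * expectation (F V) + deviation_rate C K n \<delta> \<alpha>" .
  qed simp
qed

end

lemma fmax_mono:
  assumes "finite y" "\<And>k. k \<in> y \<Longrightarrow> V k \<le> W k"
  shows "fmax x y V \<le> fmax x y W"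
proof (cases "y = {}")
  case False
  have "x k + V k \<le> Max ((\<lambda>k. x k + W k) ` y)" if "k \<in> y" for k
    using assms that by (intro order_trans[OF _ Max_ge[where x = "x k + W k"]]) auto
  then show ?thesis using False assms(1) by (simp add: fmax_def Max_le_iff)
qed (simp add: fmax_def)

lemma fmax_add_const:
  assumes "finite y" "y \<noteq> {}"
  shows "fmax x y (\<lambda>k. V k + e) = fmax x y V + e"
  using Max_add_commute[OF assms, of "\<lambda>k. x k + V k" e] by (simp add: fmax_def add.assoc)

lemma fmax_le_add:
  assumes "finite y" "0 \<le> e" "\<And>k. k \<in> y \<Longrightarrow> W k \<le> V k + e"
  shows "fmax x y W \<le> fmax x y V + e"
proof (cases "y = {}")
  case False
  have "fmax x y W \<le> fmax x y (\<lambda>k. V k + e)" using assms by (intro fmax_mono)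
  then show ?thesis using fmax_add_const[OF \<open>finite y\<close> False] by simp
qed (use assms in \<open>simp add: fmax_def\<close>)

lemma dfmax_range:
  assumes "y \<subseteq> {1..K}" "V \<in> offset_cube K V0 C" "0 \<le> C"
  shows "0 \<le> dfmax x y V V0 \<and> dfmax x y V V0 \<le> C"
proof -
  have "finite y" using assms(1) finite_subset by blast
  moreover have "V0 k \<le> V k" "V k \<le> V0 k + C" if "k \<in> y" for k
  proof -
    have "k \<in> {1..K}" using that assms(1) by blast
    then have "0 \<le> V k - V0 k \<and> V k - V0 k \<le> C" using assms(2) unfolding offset_cube_def by blast
    then show "V0 k \<le> V k" "V k \<le> V0 k + C" by linarith+
  qed
  ultimately show ?thesis
    unfolding dfmax_def using fmax_mono[of y V0 V x] fmax_le_add[of y C V V0 x] assms(3) by auto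
qed

lemma borel_measurable_fmax:
  fixes X :: "'a \<Rightarrow> nat \<Rightarrow> real" and Y :: "'a \<Rightarrow> nat set"
  assumes [measurable]: "\<And>k. (\<lambda>\<omega>. X \<omega> k) \<in> borel_measurable M"
    and Y_sets: "\<And>k. {\<omega> \<in> space M. k \<in> Y \<omega>} \<in> sets M"
    and Y_subset: "\<And>\<omega>. \<omega> \<in> space M \<Longrightarrow> Y \<omega> \<subseteq> A" and "finite A"
  shows "(\<lambda>\<omega>. fmax (X \<omega>) (Y \<omega>) V) \<in> borel_measurable M"
proof -
  have [measurable]: "Measurable.pred M (\<lambda>\<omega>. k \<in> Y \<omega>)" for k
    using Y_sets by (simp add: pred_def)
  have "Y -` {S} \<inter> space M \<in> sets M" if "S \<in> Pow A" for S
  proof -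
    have "Y -` {S} \<inter> space M = {\<omega> \<in> space M. \<forall>k \<in> A. k \<in> Y \<omega> \<longleftrightarrow> k \<in> S}"
      using that Y_subset by blast
    also have "\<dots> \<in> sets M"
      by (intro pred_intros_finite[OF \<open>finite A\<close>, unfolded pred_def]) measurable
    finally show ?thesis .
  qed
  then have Y_measurable: "Y \<in> measurable M (count_space (Pow A))"
    using Y_subset \<open>finite A\<close> by (simp add: measurable_count_space_eq2 Pi_iff)
  have Max_measurable: "(\<lambda>\<omega>. Max ((\<lambda>k. X \<omega> k + V k) ` S)) \<in> borel_measurable M" if "S \<in> Pow A" for S
    using that \<open>finite A\<close> by (intro borel_measurable_Max) (auto intro: finite_subset)
  have "(\<lambda>\<omega>. Max ((\<lambda>k. X \<omega> k + V k) ` Y \<omega>)) \<in> borel_measurable M"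
    using \<open>finite A\<close> by (intro measurable_compose_countable'[OF Max_measurable Y_measurable] countable_finite) auto
  then show ?thesis by (simp add: fmax_def)
qed

lemma monotone_cube_family_dfmax:
  fixes X :: "'a \<Rightarrow> nat \<Rightarrow> real" and Y :: "'a \<Rightarrow> nat set"
  assumes "prob_space M" "0 < C"
    and "\<And>k. (\<lambda>\<omega>. X \<omega> k) \<in> borel_measurable M"
    and "\<And>k. {\<omega> \<in> space M. k \<in> Y \<omega>} \<in> sets M"
    and Y_subset: "\<And>\<omega>. \<omega> \<in> space M \<Longrightarrow> Y \<omega> \<subseteq> {1..K}"
  shows "monotone_cube_family M (\<lambda>V \<xi>. dfmax (X \<xi>) (Y \<xi>) V V0) K V0 C"
proof (rule monotone_cube_family.intro[OF assms(1)], unfold_locales)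
  have Y_finite: "finite (Y \<xi>)" if "\<xi> \<in> space M" for \<xi>
    using Y_subset[OF that] finite_subset by blast
  show "0 < C" by (rule assms(2))
  show "(\<lambda>\<xi>. dfmax (X \<xi>) (Y \<xi>) V V0) \<in> borel_measurable M" for V
    unfolding dfmax_def using assms(3-5)
    by (intro borel_measurable_diff borel_measurable_fmax[where A = "{1..K}"]) auto
  show "0 \<le> dfmax (X \<xi>) (Y \<xi>) V V0 \<and> dfmax (X \<xi>) (Y \<xi>) V V0 \<le> C"
    if "V \<in> offset_cube K V0 C" "\<xi> \<in> space M" for V \<xi>
    using dfmax_range[OF Y_subset[OF that(2)] that(1)] assms(2) by simp
  show "dfmax (X \<xi>) (Y \<xi>) V V0 \<le> dfmax (X \<xi>) (Y \<xi>) W V0"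
    if "\<xi> \<in> space M" "\<forall>k \<in> {1..K}. V k \<le> W k" for V W \<xi>
    using that Y_subset[OF that(1)] by (auto simp: dfmax_def intro!: fmax_mono Y_finite)
  show "dfmax (X \<xi>) (Y \<xi>) W V0 \<le> dfmax (X \<xi>) (Y \<xi>) V V0 + e"
    if "\<xi> \<in> space M" "0 \<le> e" "\<forall>k \<in> {1..K}. W k \<le> V k + e" for V W e \<xi>
    using that Y_subset[OF that(1)] by (auto simp: dfmax_def intro!: fmax_le_add Y_finite)
qed

theorem lemma7:
  fixes M :: "'a measure" and X :: "'a \<Rightarrow> nat \<Rightarrow> real" and Y :: "'a \<Rightarrow> nat set"
    and K n :: nat and C \<delta> \<alpha> :: real and V0 :: "nat \<Rightarrow> real"
  assumes "prob_space M"
    and "C > 0" and "n \<ge> 1"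
    and "\<And>k. (\<lambda>\<omega>. X \<omega> k) \<in> borel_measurable M"
    and "\<And>k. {\<omega> \<in> space M. k \<in> Y \<omega>} \<in> sets M"
    and "\<And>\<omega> k. \<omega> \<in> space M \<Longrightarrow> k \<in> {1..K} \<Longrightarrow> 0 \<le> X \<omega> k \<and> X \<omega> k \<le> C"
    and "\<And>\<omega>. \<omega> \<in> space M \<Longrightarrow> Y \<omega> \<subseteq> {1..K}"
    and "AE \<omega> in M. Y \<omega> \<noteq> {}"
    and "0 < \<delta>" and "\<delta> < 1" and "0 < \<alpha>" and "\<alpha> \<le> 1"
  shows "\<exists>E \<in> sets (PiM {1..n} (\<lambda>_. M)).
           measure (PiM {1..n} (\<lambda>_. M)) E \<ge> 1 - \<delta> \<and>
           (\<forall>\<omega> \<in> E. \<forall>V :: nat \<Rightarrow> real.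
              (\<forall>k \<in> {1..K}. 0 \<le> V k - V0 k \<and> V k - V0 k \<le> C) \<longrightarrow>
              (1 / real n) * (\<Sum>i = 1..n. dfmax (X (\<omega> i)) (Y (\<omega> i)) V V0)
                \<le> (1 + \<alpha>) * (\<integral>\<xi>. dfmax (X \<xi>) (Y \<xi>) V V0 \<partial>M)
                  + 2 * C * real K * ln (3 * real n / \<delta>) / (\<alpha> * real n))"
proof -
  have "1 \<le> K"
  proof (rule ccontr)
    assume "\<not> 1 \<le> K"
    then have "AE \<omega> in M. False" using assms(7,8) by (auto elim!: AE_mp)
    then show False using prob_space.AE_False[OF assms(1)] by simp
  qed
  interpret monotone_cube_family M "\<lambda>V \<xi>. dfmax (X \<xi>) (Y \<xi>) V V0" K V0 C
    using assms(1,2,4,5,7) by (rule monotone_cube_family_dfmax)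
  show ?thesis
    using empirical_mean_bound_over_cube[of n \<alpha> \<delta>] assms \<open>1 \<le> K\<close>
    by (simp add: offset_cube_def deviation_rate_def)
qed

end
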